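(* For every integer $n\ge 4$ there exists a family of $\left\lfloor \frac{6(n-1)}{5}\right\rfloor$ even cycles on a vertex set of size $n$ which contains no rainbow even cycle.
   Context: A (colored) graph is a finite set $\mathsf G$ of pairs $(e,\alpha)$, where the $e$'s are pairwise distinct 2-element subsets $\{u,v\}$ (written $uv$) of a vertex set and $\alpha$ is a color (different edges may have the same color). $\chi(\mathsf G)$ is the set of colors used; $\mathsf G$ is rainbow if $|\chi(\mathsf G)|=|\mathsf G|$. A cycle is a colored graph whose underlying uncolored edge set forms a cycle; it is even if its number of edges is even. A family of cycles on a vertex set $V$ is a list $(\mathsf D_1,\dots,\mathsf D_m)$ of cycles with vertices in $V$, where all edges of $\mathsf D_i$ receive one color $\alpha_i$ and $\alpha_1,\dots,\alpha_m$ are pairwise distinct (the underlying uncolored cycles may coincide). The family contains a rainbow even cycle if there is an even cycle $\mathsf G\subseteq\bigcup_i\mathsf D_i$ that is rainbow, i.e. formed by edges from pairwise distinct $\mathsf D_i$'s. *)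

theory Defs
  imports Main
begin

definition is_cycle :: "'a set set \<Rightarrow> bool" where
  "is_cycle E \<longleftrightarrow> (\<exists>vs. distinct vs \<and> length vs \<ge> 3 \<and>
      E = {{vs ! i, vs ! ((i + 1) mod length vs)} | i. i < length vs})"

definition is_even_cycle :: "'a set set \<Rightarrow> bool" where
  "is_even_cycle E \<longleftrightarrow> is_cycle E \<and> even (card E)"

text \<open>A family of even cycles on vertex set V: the i-th cycle has color i,
  so colors are pairwise distinct automatically.\<close>
definition even_cycle_family_on :: "'a set \<Rightarrow> 'a set set list \<Rightarrow> bool" where
  "even_cycle_family_on V Ds \<longleftrightarrow>
     (\<forall>D\<in>set Ds. is_even_cycle D \<and> (\<forall>e\<in>D. e \<subseteq> V))"

definition has_rainbow_even_cycle :: "'a set set list \<Rightarrow> bool" where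
  "has_rainbow_even_cycle Ds \<longleftrightarrow>
     (\<exists>C f. is_even_cycle C \<and> inj_on f C \<and>
        (\<forall>e\<in>C. f e < length Ds \<and> e \<in> Ds ! f e))"

end

theory Submission
  imports Defs
begin

text \<open>A rainbow even cycle C picks pairwise distinct members of the family for its
  edges, so every set A of edges of C meets at least card A members (Hall's condition).
  The families built here contain no even cycle satisfying this condition.
  The building block on the vertices b, ..., b+5 consists of the 4-cycles b, b+1, b+5, b+2
  and b, b+3, b+4, b+5, each taken three times; a propositional case check (every vertex has
  degree 0 or 2, the length is even, and the edges of each 4-cycle meet only three members)
  excludes every even cycle in its union. Blocks are chained so that consecutive blocks share
  a single cut vertex; since a cycle cannot pass through a cut vertex, an offending even cycle
  of the chain would already live in one block. Each block adds 5 vertices and 6 cycles,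
  and small base families account for the residue of n - 1 modulo 5.\<close>

definition cycle_edge :: "'a list \<Rightarrow> nat \<Rightarrow> 'a set" where
  "cycle_edge vs i = {vs ! i, vs ! (Suc i mod length vs)}"

definition cycle_edges :: "'a list \<Rightarrow> 'a set set" where
  "cycle_edges vs = cycle_edge vs ` {..<length vs}"

lemma is_cycle_iff:
  "is_cycle C \<longleftrightarrow> (\<exists>vs. distinct vs \<and> 3 \<le> length vs \<and> C = cycle_edges vs)"
  unfolding is_cycle_def cycle_edges_def cycle_edge_def by auto

lemma cycle_edges_Cons:
  "cycle_edges (v # vs) = (\<lambda>(a, b). {a, b}) ` set (zip (v # vs) (vs @ [v]))"
proof -
  have "cycle_edges xs = (\<lambda>(a, b). {a, b}) ` set (zip xs (rotate1 xs))" for xs :: "'a list"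
  proof -
    have "set (zip xs (rotate1 xs)) = (\<lambda>i. (xs ! i, xs ! (Suc i mod length xs))) ` {..<length xs}"
      unfolding set_zip by (auto simp: nth_rotate1)
    then show ?thesis
      unfolding cycle_edges_def cycle_edge_def by (simp add: image_image)
  qed
  from this[of "v # vs"] show ?thesis by simp
qed

lemma Suc_mod_length_less: "i < length xs \<Longrightarrow> Suc i mod length xs < length xs"
  by (auto intro: mod_less_divisor)

lemma inj_on_cycle_edge:
  assumes "distinct vs" "3 \<le> length vs"
  shows "inj_on (cycle_edge vs) {..<length vs}"
proof (rule inj_onI)
  fix i j assume "i \<in> {..<length vs}" "j \<in> {..<length vs}"
    and eq: "cycle_edge vs i = cycle_edge vs j"
  let ?L = "length vs"
  have ij: "i < ?L" "j < ?L" "Suc i mod ?L < ?L" "Suc j mod ?L < ?L"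
    using \<open>i \<in> _\<close> \<open>j \<in> _\<close> by (auto intro: Suc_mod_length_less)
  from eq consider "i = j" | "i = Suc j mod ?L" "Suc i mod ?L = j"
    unfolding cycle_edge_def doubleton_eq_iff
    using nth_eq_iff_index_eq[OF assms(1)] ij by metis
  then show "i = j"
  proof cases
    case 2
    with ij assms(2) show ?thesis
      by (auto simp: mod_Suc split: if_splits)
  qed
qed

lemma card_cycle_edges:
  "distinct vs \<Longrightarrow> 3 \<le> length vs \<Longrightarrow> card (cycle_edges vs) = length vs"
  unfolding cycle_edges_def by (simp add: card_image inj_on_cycle_edge)

lemma is_even_cycle_cycle_edges:
  "distinct vs \<Longrightarrow> 3 \<le> length vs \<Longrightarrow> even (length vs) \<Longrightarrow> is_even_cycle (cycle_edges vs)"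
  unfolding is_even_cycle_def is_cycle_iff by (auto simp: card_cycle_edges)

lemma even_cycle_card_ge_4:
  assumes "is_even_cycle C" shows "4 \<le> card C"
proof -
  obtain vs where "distinct vs" "3 \<le> length vs" "C = cycle_edges vs"
    using assms unfolding is_even_cycle_def is_cycle_iff by blast
  with assms show ?thesis
    unfolding is_even_cycle_def by (auto simp: card_cycle_edges elim: oddE)
qed

lemma Suc_mod_neq: "2 \<le> n \<Longrightarrow> i < n \<Longrightarrow> Suc i mod n \<noteq> (i::nat)"
  by (cases "Suc i = n") auto

lemma card_cycle_edge:
  assumes "is_cycle C" "e \<in> C" shows "card e = 2"
proof -
  obtain vs where vs: "distinct vs" "3 \<le> length vs" "C = cycle_edges vs"
    using assms(1) unfolding is_cycle_iff by blast
  then obtain i where i: "i < length vs" "e = cycle_edge vs i"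
    using assms(2) unfolding cycle_edges_def by auto
  have "vs ! i \<noteq> vs ! (Suc i mod length vs)"
    using nth_eq_iff_index_eq[OF vs(1) i(1) Suc_mod_length_less[OF i(1)]]
      Suc_mod_neq[of "length vs" i] vs(2) i(1) by auto
  then show ?thesis using i(2) unfolding cycle_edge_def by simp
qed

lemma cycle_degree:
  assumes "is_cycle C" shows "card {e\<in>C. v \<in> e} \<in> {0, 2}"
proof -
  obtain vs where vs: "distinct vs" "3 \<le> length vs" "C = cycle_edges vs"
    using assms unfolding is_cycle_iff by blast
  let ?L = "length vs"
  show ?thesis
  proof (cases "v \<in> set vs")
    case False
    then have "{e\<in>C. v \<in> e} = {}"
      unfolding vs(3) cycle_edges_def cycle_edge_def by (auto simp: Suc_mod_length_less)
    then show ?thesis by (metis card.empty insertI1)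
  next
    case True
    then obtain p where p: "p < ?L" "vs ! p = v" by (auto simp: in_set_conv_nth)
    define q where "q = (if p = 0 then ?L - 1 else p - 1)"
    have q: "q < ?L" "Suc q mod ?L = p" "q \<noteq> p"
      using p(1) vs(2) by (auto simp: q_def)
    have "v \<in> cycle_edge vs i \<longleftrightarrow> i = p \<or> i = q" if "i < ?L" for i
    proof -
      have "v \<in> cycle_edge vs i \<longleftrightarrow> i = p \<or> Suc i mod ?L = Suc q mod ?L"
        unfolding cycle_edge_def q(2) p(2)[symmetric]
        using nth_eq_iff_index_eq[OF vs(1) that p(1)]
          nth_eq_iff_index_eq[OF vs(1) Suc_mod_length_less[OF that] p(1)] by auto
      also have "Suc i mod ?L = Suc q mod ?L \<longleftrightarrow> i = q"
        using that q(1) by (auto simp: mod_Suc split: if_splits)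
      finally show ?thesis .
    qed
    then have "{e\<in>C. v \<in> e} = cycle_edge vs ` {p, q}"
      unfolding vs(3) cycle_edges_def using p(1) q(1) by auto
    moreover have "card (cycle_edge vs ` {p, q}) = 2"
      using inj_on_subset[OF inj_on_cycle_edge[OF vs(1,2)], of "{p, q}"] p(1) q
      by (simp add: card_image)
    ultimately show ?thesis by simp
  qed
qed

lemma discrete_ivt:
  fixes g :: "nat \<Rightarrow> 'a::linorder"
  assumes steps: "\<And>t. (g t \<le> h \<and> g (Suc t) \<le> h) \<or> (h \<le> g t \<and> h \<le> g (Suc t))"
    and "a \<le> b" and crossing: "(g a < h \<and> h < g b) \<or> (h < g a \<and> g b < h)"
  shows "\<exists>t. a < t \<and> t < b \<and> g t = h"
  using \<open>a \<le> b\<close> crossing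
proof (induction b rule: dec_induct)
  case (step t)
  show ?case
  proof (cases "g t = h")
    case True
    moreover have "a \<noteq> t" using True step.prems by auto
    ultimately show ?thesis using step.hyps by (intro exI[of _ t]) auto
  next
    case False
    then show ?thesis using step steps[of t] by fastforce
  qed
qed (meson less_asym)

lemma cycle_on_one_side_of_vertex:
  fixes C :: "'a::linorder set set"
  assumes "is_cycle C" and sides: "\<forall>e\<in>C. e \<subseteq> {..h} \<or> e \<subseteq> {h..}"
  shows "(\<forall>e\<in>C. e \<subseteq> {..h}) \<or> (\<forall>e\<in>C. e \<subseteq> {h..})"
proof (rule ccontr)
  \<comment> \<open>Walking around the cycle from a vertex below h to one above h and back, the walk
    meets h twice, but h occurs on the cycle only once.\<close>
  assume "\<not> ?thesis"
  then obtain x y where xy: "x \<in> \<Union>C" "x < h" "y \<in> \<Union>C" "h < y"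
    by (auto simp: subset_eq not_le)
  obtain vs where vs: "distinct vs" "3 \<le> length vs" "C = cycle_edges vs"
    using assms(1) unfolding is_cycle_iff by blast
  let ?L = "length vs"
  have L: "0 < ?L" using vs(2) by linarith
  define g where "g t = vs ! (t mod ?L)" for t
  have edge: "cycle_edge vs (t mod ?L) = {g t, g (Suc t)}" for t
    unfolding cycle_edge_def g_def by (simp add: mod_Suc_eq)
  have steps: "(g t \<le> h \<and> g (Suc t) \<le> h) \<or> (h \<le> g t \<and> h \<le> g (Suc t))" for t
  proof -
    have "cycle_edge vs (t mod ?L) \<in> C"
      unfolding vs(3) cycle_edges_def using L by (intro imageI) simp
    then show ?thesis using sides edge[of t] by auto
  qed
  have "\<Union>C \<subseteq> set vs"
    unfolding vs(3) cycle_edges_def cycle_edge_def by (auto simp: Suc_mod_length_less)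
  then obtain a c where ac: "a < ?L" "c < ?L" "g a < h" "h < g c"
    using xy unfolding g_def by (metis in_set_conv_nth mod_less subsetD)
  have "a \<noteq> c" using ac(3,4) less_asym by blast
  define p q where "p = min a c" and "q = max a c"
  have pq: "p < q" "q < ?L" "g (p + ?L) = g p"
    using ac \<open>a \<noteq> c\<close> unfolding p_def q_def g_def by auto
  have cross: "(g p < h \<and> h < g q) \<or> (h < g p \<and> g q < h)"
    using ac unfolding p_def q_def by (auto simp: min_def max_def)
  obtain t1 where t1: "p < t1" "t1 < q" "g t1 = h"
    using discrete_ivt[of g h p q, OF steps] pq cross by auto
  obtain t2 where t2: "q < t2" "t2 < p + ?L" "g t2 = h"
    using discrete_ivt[of g h q "p + ?L", OF steps] pq cross by auto
  have "vs ! (t2 mod ?L) = vs ! (t1 mod ?L)"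
    using t1(3) t2(3) unfolding g_def by simp
  then have "t2 mod ?L = t1 mod ?L"
    using nth_eq_iff_index_eq[OF vs(1) mod_less_divisor[OF L] mod_less_divisor[OF L]] by blast
  moreover have "t1 \<le> t2" using t1(2) t2(1) by simp
  ultimately obtain s where "t2 = t1 + ?L * s" by (rule mod_eq_nat1E)
  then show False using t1 t2 by (cases s) auto
qed

definition hall_condition :: "'a set set \<Rightarrow> 'a set set list \<Rightarrow> bool" where
  "hall_condition C Ds \<longleftrightarrow> (\<forall>A\<subseteq>C. card A \<le> length (filter (\<lambda>X. X \<inter> A \<noteq> {}) Ds))"

definition hall_free :: "'a set set list \<Rightarrow> bool" where
  "hall_free Ds \<longleftrightarrow> (\<forall>C. is_even_cycle C \<longrightarrow> \<not> hall_condition C Ds)"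

lemma rainbow_imp_hall_condition:
  assumes inj: "inj_on f C" and col: "\<forall>e\<in>C. f e < length Ds \<and> e \<in> Ds ! f e"
  shows "hall_condition C Ds"
  unfolding hall_condition_def
proof (intro allI impI)
  fix A assume "A \<subseteq> C"
  then have "card A = card (f ` A)" using inj by (simp add: card_image inj_on_subset)
  also have "\<dots> \<le> card {i. i < length Ds \<and> Ds ! i \<inter> A \<noteq> {}}"
    using col \<open>A \<subseteq> C\<close> by (intro card_mono) auto
  finally show "card A \<le> length (filter (\<lambda>X. X \<inter> A \<noteq> {}) Ds)"
    by (simp add: length_filter_conv_card)
qed

lemma hall_free_imp_no_rainbow: "hall_free Ds \<Longrightarrow> \<not> has_rainbow_even_cycle Ds"
  unfolding hall_free_def has_rainbow_even_cycle_def using rainbow_imp_hall_condition by blast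

lemma hall_free_Nil: "hall_free []"
  unfolding hall_free_def
proof (intro allI impI notI)
  fix C assume C: "is_even_cycle C" and "hall_condition C []"
  then have "card C \<le> 0" unfolding hall_condition_def by simp
  then show False using even_cycle_card_ge_4[OF C] by simp
qed

lemma hall_condition_subset_Union:
  assumes "hall_condition C Ds" shows "C \<subseteq> \<Union>(set Ds)"
proof
  fix e assume "e \<in> C"
  then have "card {e} \<le> length (filter (\<lambda>X. X \<inter> {e} \<noteq> {}) Ds)"
    using assms unfolding hall_condition_def by blast
  then have "filter (\<lambda>X. X \<inter> {e} \<noteq> {}) Ds \<noteq> []" by auto
  then show "e \<in> \<Union>(set Ds)" by (auto simp: filter_empty_conv)
qed

lemma hall_condition_append_commute:
  "hall_condition C (Ds1 @ Ds2) \<longleftrightarrow> hall_condition C (Ds2 @ Ds1)"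
  unfolding hall_condition_def by (simp add: add.commute)

lemma hall_condition_append_disjoint:
  assumes "hall_condition C (Ds1 @ Ds2)" "\<forall>X\<in>set Ds2. X \<inter> C = {}"
  shows "hall_condition C Ds1"
proof -
  have "filter (\<lambda>X. X \<inter> A \<noteq> {}) Ds2 = []" if "A \<subseteq> C" for A
    using assms(2) that by (auto simp: filter_empty_conv)
  then show ?thesis using assms(1) unfolding hall_condition_def by simp
qed

lemma hall_free_append:
  fixes h :: "'a::linorder"
  assumes left: "\<forall>X\<in>set Ds1. \<forall>e\<in>X. e \<subseteq> {..h}"
    and right: "\<forall>X\<in>set Ds2. \<forall>e\<in>X. e \<subseteq> {h..}"
    and "hall_free Ds1" "hall_free Ds2"
  shows "hall_free (Ds1 @ Ds2)"
  unfolding hall_free_def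
proof (intro allI impI notI)
  fix C assume C: "is_even_cycle C" and hall: "hall_condition C (Ds1 @ Ds2)"
  have cyc: "is_cycle C" using C unfolding is_even_cycle_def by simp
  have not_both: False if "e \<in> C" "e \<subseteq> {..h}" "e \<subseteq> {h..}" for e
  proof -
    from that(2,3) have "e \<subseteq> {h}" by (auto simp: subset_eq order_antisym_conv)
    then have "card e \<le> card {h}" by (intro card_mono) auto
    then show False using card_cycle_edge[OF cyc that(1)] by simp
  qed
  have "\<forall>e\<in>C. e \<subseteq> {..h} \<or> e \<subseteq> {h..}"
  proof
    fix e assume "e \<in> C"
    then obtain X where "X \<in> set Ds1 \<or> X \<in> set Ds2" "e \<in> X"
      using hall_condition_subset_Union[OF hall] by auto
    then show "e \<subseteq> {..h} \<or> e \<subseteq> {h..}" using left right by blast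
  qed
  then consider "\<forall>e\<in>C. e \<subseteq> {..h}" | "\<forall>e\<in>C. e \<subseteq> {h..}"
    using cycle_on_one_side_of_vertex[OF cyc] by blast
  then show False
  proof cases
    case 1
    have "X \<inter> C = {}" if "X \<in> set Ds2" for X
    proof (rule equals0I)
      fix e assume "e \<in> X \<inter> C"
      then show False using not_both[of e] 1 right that by simp
    qed
    then have "hall_condition C Ds1" using hall_condition_append_disjoint[OF hall] by blast
    then show False using C \<open>hall_free Ds1\<close> unfolding hall_free_def by blast
  next
    case 2
    have "X \<inter> C = {}" if "X \<in> set Ds1" for X
    proof (rule equals0I)
      fix e assume "e \<in> X \<inter> C"
      then show False using not_both[of e] 2 left that by simp
    qed
    then have "hall_condition C Ds2"
      using hall_condition_append_disjoint[OF hall_condition_append_commute[THEN iffD1, OF hall]]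
      by blast
    then show False using C \<open>hall_free Ds2\<close> unfolding hall_free_def by blast
  qed
qed

text \<open>Cardinality constraints as recursive functions: on explicit lists, simp unfolds them
  into propositional formulas that sat decides.\<close>

fun at_most :: "nat \<Rightarrow> bool list \<Rightarrow> bool" where
  "at_most m [] = True"
| "at_most m (b # bs) = ((b \<and> 0 < m \<and> at_most (m - 1) bs) \<or> (\<not> b \<and> at_most m bs))"

fun odd_parity :: "bool list \<Rightarrow> bool" where
  "odd_parity [] = False"
| "odd_parity (b # bs) = (b \<noteq> odd_parity bs)"

lemma at_most_iff: "at_most m bs \<longleftrightarrow> count_list bs True \<le> m"
proof (induction bs arbitrary: m)
  case (Cons b bs)
  then show ?case by (cases m) auto
qed simp

lemma odd_parity_iff: "odd_parity bs \<longleftrightarrow> odd (count_list bs True)"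
  by (induction bs) auto

lemma card_Int_set_eq_count_list:
  "distinct es \<Longrightarrow> card (C \<inter> set es) = count_list (map (\<lambda>e. e \<in> C) es) True"
  by (induction es) (simp_all add: Int_insert_right)

definition zero_or_two :: "bool list \<Rightarrow> bool" where
  "zero_or_two bs \<longleftrightarrow> at_most 0 bs \<or> (at_most 2 bs \<and> \<not> at_most 1 bs)"

lemma zero_or_two_iff: "zero_or_two bs \<longleftrightarrow> count_list bs True \<in> {0, 2}"
  unfolding zero_or_two_def at_most_iff by auto

lemma even_cycle_constraints:
  assumes C: "is_even_cycle C" and "C \<subseteq> set es" "distinct es"
  shows "zero_or_two (map (\<lambda>e. e \<in> C) [e\<leftarrow>es. v \<in> e])"
    and "\<not> odd_parity (map (\<lambda>e. e \<in> C) es)"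
    and "\<not> at_most 0 (map (\<lambda>e. e \<in> C) es)"
proof -
  have "{e\<in>C. v \<in> e} = C \<inter> set [e\<leftarrow>es. v \<in> e]" using assms(2) by auto
  then have "card {e\<in>C. v \<in> e} = count_list (map (\<lambda>e. e \<in> C) [e\<leftarrow>es. v \<in> e]) True"
    using card_Int_set_eq_count_list[of "[e\<leftarrow>es. v \<in> e]" C] assms(3) by simp
  then show "zero_or_two (map (\<lambda>e. e \<in> C) [e\<leftarrow>es. v \<in> e])"
    using cycle_degree[of C v] C unfolding is_even_cycle_def zero_or_two_iff by metis
  have "card C = count_list (map (\<lambda>e. e \<in> C) es) True"
    using card_Int_set_eq_count_list[OF assms(3), of C] assms(2) by (simp add: Int_absorb2)
  then show "\<not> odd_parity (map (\<lambda>e. e \<in> C) es)" "\<not> at_most 0 (map (\<lambda>e. e \<in> C) es)"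
    using C even_cycle_card_ge_4[OF C] unfolding is_even_cycle_def odd_parity_iff at_most_iff
    by auto
qed

lemma hall_condition_at_most:
  assumes "hall_condition C Ds" "distinct es"
    and "length (filter (\<lambda>X. X \<inter> set es \<noteq> {}) Ds) \<le> m"
  shows "at_most m (map (\<lambda>e. e \<in> C) es)"
proof -
  have "card (C \<inter> set es) \<le> length (filter (\<lambda>X. X \<inter> (C \<inter> set es) \<noteq> {}) Ds)"
    using assms(1) unfolding hall_condition_def by blast
  also have "\<dots> \<le> length (filter (\<lambda>X. X \<inter> set es \<noteq> {}) Ds)"
    by (induction Ds) auto
  finally show ?thesis
    using assms(3) card_Int_set_eq_count_list[OF assms(2)] unfolding at_most_iff by simp
qed

definition block :: "nat \<Rightarrow> nat set set list" where
  "block b = replicate 3 (cycle_edges [b, b+1, b+5, b+2])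
    @ replicate 3 (cycle_edges [b, b+3, b+4, b+5])"

lemma hall_free_block: "hall_free (block b)"
  unfolding hall_free_def
proof (intro allI impI notI)
  fix C assume C: "is_even_cycle C" and hall: "hall_condition C (block b)"
  define es1 where "es1 = [{b, b+1}, {b+1, b+5}, {b+5, b+2}, {b+2, b}]"
  define es2 where "es2 = [{b, b+3}, {b+3, b+4}, {b+4, b+5}, {b+5, b}]"
  have "\<Union>(set (block b)) \<subseteq> set (es1 @ es2)"
    by (simp add: block_def cycle_edges_Cons es1_def es2_def)
  then have sub: "C \<subseteq> set (es1 @ es2)" using hall_condition_subset_Union[OF hall] by blast
  have dist: "distinct (es1 @ es2)" by (simp add: es1_def es2_def doubleton_eq_iff)
  note constraints = even_cycle_constraints[OF C sub dist]
  have "at_most 3 (map (\<lambda>e. e \<in> C) es1)"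
    by (rule hall_condition_at_most[OF hall])
      (use dist in \<open>simp_all add: block_def cycle_edges_Cons es1_def doubleton_eq_iff\<close>)
  moreover have "at_most 3 (map (\<lambda>e. e \<in> C) es2)"
    by (rule hall_condition_at_most[OF hall])
      (use dist in \<open>simp_all add: block_def cycle_edges_Cons es2_def doubleton_eq_iff\<close>)
  ultimately show False
    using constraints(2,3) constraints(1)[of b] constraints(1)[of "b+1"] constraints(1)[of "b+2"]
      constraints(1)[of "b+3"] constraints(1)[of "b+4"] constraints(1)[of "b+5"]
    unfolding es1_def es2_def zero_or_two_def
    apply (simp (no_asm_use))
    by sat
qed

text \<open>Base families on {..r} with 6 * r div 5 cycles for r = 3, 4, 6, 7; with the empty
  family on {..0} they cover all residues of n - 1 modulo 5.\<close>

definition gadget4 :: "nat set set list" where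
  "gadget4 = replicate 3 (cycle_edges [0, 1, 2, 3])"

definition gadget5 :: "nat set set list" where
  "gadget5 = replicate 2 (cycle_edges [0, 1, 3, 2]) @ replicate 2 (cycle_edges [0, 1, 4, 3])"

definition gadget7 :: "nat set set list" where
  "gadget7 = replicate 3 (cycle_edges [0, 1, 3, 2]) @ [cycle_edges [0, 3, 5, 4]]
    @ replicate 3 (cycle_edges [1, 4, 6, 5])"

definition gadget8 :: "nat set set list" where
  "gadget8 = replicate 5 (cycle_edges [0, 1, 7, 4, 3, 2]) @ replicate 3 (cycle_edges [0, 7, 6, 5])"

lemma hall_free_gadget4: "hall_free gadget4"
  unfolding hall_free_def
proof (intro allI impI notI)
  fix C assume C: "is_even_cycle C" and hall: "hall_condition C gadget4"
  define es :: "nat set list" where "es = [{0, 1}, {1, 2}, {2, 3}, {3, 0}]"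
  have "\<Union>(set gadget4) \<subseteq> set es" by (simp add: gadget4_def cycle_edges_Cons es_def)
  then have sub: "C \<subseteq> set es" using hall_condition_subset_Union[OF hall] by blast
  have dist: "distinct es" by (simp add: es_def doubleton_eq_iff)
  note constraints = even_cycle_constraints[OF C sub dist]
  have "at_most 3 (map (\<lambda>e. e \<in> C) es)"
    by (rule hall_condition_at_most[OF hall dist])
      (use length_filter_le[of _ gadget4] in \<open>simp add: gadget4_def\<close>)
  then show False
    using constraints(2,3) constraints(1)[of 0] constraints(1)[of 1] constraints(1)[of 2]
      constraints(1)[of 3]
    unfolding es_def zero_or_two_def
    apply (simp (no_asm_use))
    by sat
qed

lemma hall_free_gadget5: "hall_free gadget5"
  unfolding hall_free_def
proof (intro allI impI notI)
  fix C assume C: "is_even_cycle C" and hall: "hall_condition C gadget5"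
  define es :: "nat set list" where "es = [{0, 1}, {1, 3}, {3, 2}, {2, 0}, {1, 4}, {4, 3}, {3, 0}]"
  have "\<Union>(set gadget5) \<subseteq> set es" by (simp add: gadget5_def cycle_edges_Cons es_def)
  then have sub: "C \<subseteq> set es" using hall_condition_subset_Union[OF hall] by blast
  have dist: "distinct es" by (simp add: es_def doubleton_eq_iff)
  note constraints = even_cycle_constraints[OF C sub dist]
  have "at_most 2 (map (\<lambda>e. e \<in> C) [{1, 3}, {3, 2}, {2, 0}])"
    by (rule hall_condition_at_most[OF hall])
      (simp_all add: gadget5_def cycle_edges_Cons doubleton_eq_iff)
  moreover have "at_most 2 (map (\<lambda>e. e \<in> C) [{1, 4}, {4, 3}, {3, 0}])"
    by (rule hall_condition_at_most[OF hall])
      (simp_all add: gadget5_def cycle_edges_Cons doubleton_eq_iff)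
  ultimately show False
    using constraints(2,3) constraints(1)[of 0] constraints(1)[of 1] constraints(1)[of 2]
      constraints(1)[of 3] constraints(1)[of 4]
    unfolding es_def zero_or_two_def
    apply (simp (no_asm_use))
    by sat
qed

lemma hall_free_gadget7: "hall_free gadget7"
  unfolding hall_free_def
proof (intro allI impI notI)
  fix C assume C: "is_even_cycle C" and hall: "hall_condition C gadget7"
  define es :: "nat set list" where "es = [{0, 1}, {1, 3}, {3, 2}, {2, 0}, {0, 3}, {3, 5}, {5, 4},
    {4, 0}, {1, 4}, {4, 6}, {6, 5}, {5, 1}]"
  have "\<Union>(set gadget7) \<subseteq> set es" by (simp add: gadget7_def cycle_edges_Cons es_def)
  then have sub: "C \<subseteq> set es" using hall_condition_subset_Union[OF hall] by blast
  have dist: "distinct es" by (simp add: es_def doubleton_eq_iff)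
  note constraints = even_cycle_constraints[OF C sub dist]
  have "at_most 3 (map (\<lambda>e. e \<in> C) [{0, 1}, {1, 3}, {3, 2}, {2, 0}])"
    by (rule hall_condition_at_most[OF hall])
      (simp_all add: gadget7_def cycle_edges_Cons doubleton_eq_iff)
  moreover have "at_most 1 (map (\<lambda>e. e \<in> C) [{0, 3}, {3, 5}, {5, 4}, {4, 0}])"
    by (rule hall_condition_at_most[OF hall])
      (simp_all add: gadget7_def cycle_edges_Cons doubleton_eq_iff)
  moreover have "at_most 3 (map (\<lambda>e. e \<in> C) [{1, 4}, {4, 6}, {6, 5}, {5, 1}])"
    by (rule hall_condition_at_most[OF hall])
      (simp_all add: gadget7_def cycle_edges_Cons doubleton_eq_iff)
  ultimately show False
    using constraints(2,3) constraints(1)[of 0] constraints(1)[of 1] constraints(1)[of 2]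
      constraints(1)[of 3] constraints(1)[of 4] constraints(1)[of 5] constraints(1)[of 6]
    unfolding es_def zero_or_two_def
    apply (simp (no_asm_use))
    by sat
qed

lemma hall_free_gadget8: "hall_free gadget8"
  unfolding hall_free_def
proof (intro allI impI notI)
  fix C assume C: "is_even_cycle C" and hall: "hall_condition C gadget8"
  define es :: "nat set list" where "es = [{0, 1}, {1, 7}, {7, 4}, {4, 3}, {3, 2}, {2, 0}, {0, 7},
    {7, 6}, {6, 5}, {5, 0}]"
  have "\<Union>(set gadget8) \<subseteq> set es" by (simp add: gadget8_def cycle_edges_Cons es_def)
  then have sub: "C \<subseteq> set es" using hall_condition_subset_Union[OF hall] by blast
  have dist: "distinct es" by (simp add: es_def doubleton_eq_iff)
  note constraints = even_cycle_constraints[OF C sub dist]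
  have "at_most 5 (map (\<lambda>e. e \<in> C) [{0, 1}, {1, 7}, {7, 4}, {4, 3}, {3, 2}, {2, 0}])"
    by (rule hall_condition_at_most[OF hall])
      (simp_all add: gadget8_def cycle_edges_Cons doubleton_eq_iff)
  moreover have "at_most 3 (map (\<lambda>e. e \<in> C) [{0, 7}, {7, 6}, {6, 5}, {5, 0}])"
    by (rule hall_condition_at_most[OF hall])
      (simp_all add: gadget8_def cycle_edges_Cons doubleton_eq_iff)
  ultimately show False
    using constraints(2,3) constraints(1)[of 0] constraints(1)[of 1] constraints(1)[of 2]
      constraints(1)[of 3] constraints(1)[of 4] constraints(1)[of 5] constraints(1)[of 6]
      constraints(1)[of 7]
    unfolding es_def zero_or_two_def
    apply (simp (no_asm_use))
    by sat
qed

lemma even_cycle_family_on_append [simp]: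
  "even_cycle_family_on V (Ds1 @ Ds2) \<longleftrightarrow> even_cycle_family_on V Ds1 \<and> even_cycle_family_on V Ds2"
  unfolding even_cycle_family_on_def by auto

lemma even_cycle_family_on_mono:
  "even_cycle_family_on V Ds \<Longrightarrow> V \<subseteq> W \<Longrightarrow> even_cycle_family_on W Ds"
  unfolding even_cycle_family_on_def by blast

lemma even_cycle_family_on_replicate:
  "even_cycle_family_on V [D] \<Longrightarrow> even_cycle_family_on V (replicate k D)"
  unfolding even_cycle_family_on_def by simp

lemma even_cycle_family_on_cycle_edges:
  assumes "distinct vs" "3 \<le> length vs" "even (length vs)" "set vs \<subseteq> V"
  shows "even_cycle_family_on V [cycle_edges vs]"
proof -
  have "e \<subseteq> set vs" if "e \<in> cycle_edges vs" for e
    using that unfolding cycle_edges_def cycle_edge_def by (auto simp: Suc_mod_length_less)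
  then show ?thesis
    using assms is_even_cycle_cycle_edges unfolding even_cycle_family_on_def by fastforce
qed

lemma even_cycle_family_on_block: "even_cycle_family_on {b..b+5} (block b)"
  unfolding block_def by (simp add: even_cycle_family_on_replicate even_cycle_family_on_cycle_edges)

definition block_chain :: "nat \<Rightarrow> nat \<Rightarrow> nat set set list" where
  "block_chain r m = concat (map (\<lambda>j. block (r + 5 * j)) [0..<m])"

lemma block_chain_0 [simp]: "block_chain r 0 = []"
  unfolding block_chain_def by simp

lemma block_chain_Suc [simp]: "block_chain r (Suc m) = block_chain r m @ block (r + 5 * m)"
  unfolding block_chain_def by simp

lemma length_block_chain: "length (block_chain r m) = 6 * m"
  by (induction m) (simp_all add: block_def)

lemma even_cycle_family_on_block_chain: "even_cycle_family_on {r..r + 5 * m} (block_chain r m)"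
proof (induction m)
  case (Suc m)
  then show ?case
    using even_cycle_family_on_block[of "r + 5 * m"]
    by (auto intro: even_cycle_family_on_mono)
qed (simp add: even_cycle_family_on_def)

lemma even_cycle_family_on_append_block_chain:
  "even_cycle_family_on {..r} Ds \<Longrightarrow> even_cycle_family_on {..r + 5 * m} (Ds @ block_chain r m)"
  using even_cycle_family_on_block_chain[of r m] by (auto intro: even_cycle_family_on_mono)

lemma hall_free_append_block_chain:
  assumes "even_cycle_family_on {..r} Ds" "hall_free Ds"
  shows "hall_free (Ds @ block_chain r m)"
proof (induction m)
  case 0
  then show ?case using assms(2) by simp
next
  case (Suc m)
  have "hall_free ((Ds @ block_chain r m) @ block (r + 5 * m))"
  proof (rule hall_free_append[OF _ _ Suc hall_free_block])
    show "\<forall>X\<in>set (Ds @ block_chain r m). \<forall>e\<in>X. e \<subseteq> {..r + 5 * m}"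
      using even_cycle_family_on_append_block_chain[OF assms(1)]
      unfolding even_cycle_family_on_def by blast
    show "\<forall>X\<in>set (block (r + 5 * m)). \<forall>e\<in>X. e \<subseteq> {r + 5 * m..}"
      using even_cycle_family_on_block[of "r + 5 * m"]
      unfolding even_cycle_family_on_def by fastforce
  qed
  then show ?case by simp
qed

lemma family_from_base:
  assumes "even_cycle_family_on {..r} Ds" "hall_free Ds"
    and "r + 5 * m + 1 = n" "length Ds + 6 * m = L"
  shows "\<exists>(V :: nat set) Ds'. finite V \<and> card V = n \<and> length Ds' = L \<and>
           even_cycle_family_on V Ds' \<and> \<not> has_rainbow_even_cycle Ds'"
  using even_cycle_family_on_append_block_chain[OF assms(1)]
    hall_free_append_block_chain[OF assms(1,2)] hall_free_imp_no_rainbow assms(3,4)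
  by (intro exI[of _ "{..r + 5 * m}"] exI[of _ "Ds @ block_chain r m"])
    (auto simp: length_block_chain)

lemma even_cycle_family_on_gadgets:
  "even_cycle_family_on {..3} gadget4" "even_cycle_family_on {..4} gadget5"
  "even_cycle_family_on {..6} gadget7" "even_cycle_family_on {..7} gadget8"
  unfolding gadget4_def gadget5_def gadget7_def gadget8_def even_cycle_family_on_append
  by (intro conjI even_cycle_family_on_replicate even_cycle_family_on_cycle_edges; simp)+

theorem mainTheorem2:
  fixes n :: nat
  assumes "n \<ge> 4"
  shows "\<exists>(V :: nat set) Ds. finite V \<and> card V = n \<and>
           length Ds = (6 * (n - 1)) div 5 \<and>
           even_cycle_family_on V Ds \<and> \<not> has_rainbow_even_cycle Ds"
proof -
  obtain k r where n: "n - 1 = 5 * k + r" and "r < 5"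
    using div_mult_mod_eq[of "n - 1" 5] mod_less_divisor[of 5 "n - 1"]
    by (metis mult.commute zero_less_numeral)
  then have "6 * (n - 1) = r + (6 * k + r) * 5" by simp
  then have len: "6 * (n - 1) div 5 = 6 * k + r" using \<open>r < 5\<close> by simp
  from \<open>r < 5\<close> consider "r = 0" | "r = 1" | "r = 2" | "r = 3" | "r = 4" by linarith
  then show ?thesis
  proof cases
    case 1
    show ?thesis
      by (rule family_from_base[OF _ hall_free_Nil, of 0 k])
        (use 1 n len assms in \<open>simp_all add: even_cycle_family_on_def\<close>)
  next
    case 2
    show ?thesis
      by (rule family_from_base[OF even_cycle_family_on_gadgets(3) hall_free_gadget7, of "k - 1"])
        (use 2 n len assms in \<open>simp_all add: gadget7_def\<close>)
  next
    case 3
    show ?thesis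
      by (rule family_from_base[OF even_cycle_family_on_gadgets(4) hall_free_gadget8, of "k - 1"])
        (use 3 n len assms in \<open>simp_all add: gadget8_def\<close>)
  next
    case 4
    show ?thesis
      by (rule family_from_base[OF even_cycle_family_on_gadgets(1) hall_free_gadget4, of k])
        (use 4 n len assms in \<open>simp_all add: gadget4_def\<close>)
  next
    case 5
    show ?thesis
      by (rule family_from_base[OF even_cycle_family_on_gadgets(2) hall_free_gadget5, of k])
        (use 5 n len assms in \<open>simp_all add: gadget5_def\<close>)
  qed
qed

end
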